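(* Let $x:\mathbb{R}\to\mathbb{R}$ be a $2\Omega$-bandlimited signal with $|x(t)|\le c_{\max}<\infty$. Suppose $x$ is sampled by an IF-TEM with parameters $b_{\mathrm{IF}}>c_{\max}$, $\kappa>0$, $\delta>0$, and by an AIF-TEM with the same parameters $\kappa,\delta$ and a MAP block operating successfully with some $\beta>0$. If the AIF-TEM biases satisfy $b_n\le b_{\mathrm{IF}}$ for all $n$, then $f_{s_a}\le f_{s_c}$ and $OS_a\le OS_c$.
   Context: A signal $x$ is $2\Omega$-bandlimited if its Fourier transform vanishes outside $[-\Omega,\Omega]$. An IF-TEM with parameters $b_{\mathrm{IF}},\kappa,\delta$ produces strictly increasing firing times $t_n$ with $\frac1\kappa\int_{t_{n-1}}^{t_n}(x(s)+b_{\mathrm{IF}})ds=\delta$. An AIF-TEM with parameters $\kappa,\delta$ and window size $w$ produces strictly increasing firing times $t_n$ and biases $b_n>0$ with $\frac1\kappa\int_{t_{n-1}}^{t_n}(x(s)+b_n)ds=\delta$; with $c_n=\max_{t_{n-w}\le t\le t_n}|x(t)|$, the MAP block operates successfully if $b_n\ge c_n+\beta$ for all $n$. For either sampler, $T_n=t_n-t_{n-1}$, the average sampling frequency is $f_s=1/\mathbb{E}[T_n]$ where $\mathbb{E}$ is the average over the samples, and the average oversampling is $OS=f_s\cdot\pi/\Omega$; the subscripts $a$ and $c$ refer to the AIF-TEM and IF-TEM respectively. *)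

theory Defs
  imports "HOL-Analysis.Analysis"
begin

definition fourier_transform :: "(real \<Rightarrow> real) \<Rightarrow> real \<Rightarrow> complex" where
  "fourier_transform x \<omega> = (LINT t|lborel. complex_of_real (x t) * cis (- (\<omega> * t)))"

definition bandlimited :: "real \<Rightarrow> (real \<Rightarrow> real) \<Rightarrow> bool" where
  "bandlimited \<Omega> x \<longleftrightarrow> integrable lborel x \<and>
     (\<forall>\<omega>. \<bar>\<omega>\<bar> > \<Omega> \<longrightarrow> fourier_transform x \<omega> = 0)"

definition if_tem :: "real \<Rightarrow> real \<Rightarrow> real \<Rightarrow> (real \<Rightarrow> real) \<Rightarrow> (nat \<Rightarrow> real) \<Rightarrow> bool" where
  "if_tem b \<kappa> \<delta> x t \<longleftrightarrow> strict_mono t \<and>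
     (\<forall>n\<ge>1. (1/\<kappa>) * integral {t (n-1)..t n} (\<lambda>s. x s + b) = \<delta>)"

definition aif_tem :: "real \<Rightarrow> real \<Rightarrow> (real \<Rightarrow> real) \<Rightarrow> (nat \<Rightarrow> real) \<Rightarrow> (nat \<Rightarrow> real) \<Rightarrow> bool" where
  "aif_tem \<kappa> \<delta> x t b \<longleftrightarrow> strict_mono t \<and>
     (\<forall>n\<ge>1. b n > 0 \<and> (1/\<kappa>) * integral {t (n-1)..t n} (\<lambda>s. x s + b n) = \<delta>)"

text \<open>c_n = max of |x| over [t_{n-w}, t_n] (index truncated at 0).\<close>
definition window_max :: "nat \<Rightarrow> (real \<Rightarrow> real) \<Rightarrow> (nat \<Rightarrow> real) \<Rightarrow> nat \<Rightarrow> real" where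
  "window_max w x t n = Sup ((\<lambda>s. \<bar>x s\<bar>) ` {t (n - w)..t n})"

definition map_success :: "nat \<Rightarrow> real \<Rightarrow> (real \<Rightarrow> real) \<Rightarrow> (nat \<Rightarrow> real) \<Rightarrow> (nat \<Rightarrow> real) \<Rightarrow> bool" where
  "map_success w \<beta> x t b \<longleftrightarrow> (\<forall>n\<ge>1. b n \<ge> window_max w x t n + \<beta>)"

definition avg_T :: "nat \<Rightarrow> (nat \<Rightarrow> real) \<Rightarrow> real" where
  "avg_T N t = (\<Sum>n=1..N. t n - t (n-1)) / real N"

definition samp_freq :: "nat \<Rightarrow> (nat \<Rightarrow> real) \<Rightarrow> real" where
  "samp_freq N t = 1 / avg_T N t"

definition oversampling :: "real \<Rightarrow> nat \<Rightarrow> (nat \<Rightarrow> real) \<Rightarrow> real" where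
  "oversampling \<Omega> N t = samp_freq N t * pi / \<Omega>"

end

theory Submission
  imports Defs
begin

text \<open>Both samplers integrate until the same threshold \<open>\<kappa> \<delta>\<close> is reached, and the adaptive
  integrand \<open>x + b\<^sub>n\<close> never exceeds \<open>x + b\<^sub>I\<^sub>F \<ge> b\<^sub>I\<^sub>F - c\<^sub>m\<^sub>a\<^sub>x > 0\<close>. So if the adaptive
  sampler fired at or after the classical one at time \<open>n\<close> but strictly before it at time
  \<open>n + 1\<close>, the classical integral over its own \<open>n\<close>-th interval would strictly exceed the
  threshold. By induction every adaptive firing time lags the classical one; the first \<open>N\<close>
  adaptive intervals therefore span at least as much time, and the average sampling frequency is
  smaller.\<close>

lemma integral_ge_length_mult:
  fixes f :: "real \<Rightarrow> real"
  assumes "f integrable_on {a..d}" and "\<And>s. m \<le> f s" and "a \<le> d"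
  shows "m * (d - a) \<le> integral {a..d} f"
proof -
  have "integral {a..d} (\<lambda>_. m) \<le> integral {a..d} f"
    using assms(1,2) by (intro integral_le) auto
  then show ?thesis
    using assms(3) by (simp add: mult.commute)
qed

lemma firing_times_le_of_integrand_le:
  fixes f :: "real \<Rightarrow> real" and g :: "nat \<Rightarrow> real \<Rightarrow> real" and u v :: "nat \<Rightarrow> real"
  assumes f_int: "\<And>a d. f integrable_on {a..d}"
    and g_int: "\<And>n a d. g n integrable_on {a..d}"
    and g_le_f: "\<And>n s. g n s \<le> f s"
    and f_ge: "\<And>s. m \<le> f s" and "m > 0"
    and "mono v"
    and same_area: "\<And>n. integral {v n..v (Suc n)} (g n) = integral {u n..u (Suc n)} f"
    and "u 0 \<le> v 0"
  shows "u n \<le> v n"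
proof (induction n)
  case 0
  show ?case using \<open>u 0 \<le> v 0\<close> .
next
  case (Suc n)
  show ?case
  proof (rule ccontr)
    assume "\<not> u (Suc n) \<le> v (Suc n)"
    then have lag: "v (Suc n) < u (Suc n)" by simp
    have v_step: "v n \<le> v (Suc n)"
      using \<open>mono v\<close> by (simp add: monoD)
    have "integral {u n..u (Suc n)} f
        = integral {u n..v n} f + integral {v n..v (Suc n)} f + integral {v (Suc n)..u (Suc n)} f"
    proof -
      have "integral {u n..v n} f + integral {v n..v (Suc n)} f = integral {u n..v (Suc n)} f"
        using Suc.IH v_step f_int by (intro Henstock_Kurzweil_Integration.integral_combine)
      moreover have "integral {u n..v (Suc n)} f + integral {v (Suc n)..u (Suc n)} f
          = integral {u n..u (Suc n)} f"
        using Suc.IH v_step lag f_int by (intro Henstock_Kurzweil_Integration.integral_combine) auto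
      ultimately show ?thesis by simp
    qed
    moreover have "0 \<le> integral {u n..v n} f"
      using integral_ge_length_mult[OF f_int f_ge Suc.IH] Suc.IH \<open>m > 0\<close>
      by (smt (verit) mult_nonneg_nonneg)
    moreover have "integral {v n..v (Suc n)} (g n) \<le> integral {v n..v (Suc n)} f"
      using g_int f_int g_le_f by (intro integral_le) auto
    moreover have "0 < integral {v (Suc n)..u (Suc n)} f"
      using integral_ge_length_mult[OF f_int f_ge, of "v (Suc n)" "u (Suc n)"] lag \<open>m > 0\<close>
      by (smt (verit) mult_pos_pos)
    ultimately show False
      using same_area[of n] by linarith
  qed
qed

lemma if_tem_integral:
  assumes "if_tem b \<kappa> \<delta> x t" and "\<kappa> > 0"
  shows "integral {t n..t (Suc n)} (\<lambda>s. x s + b) = \<kappa> * \<delta>"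
  using assms unfolding if_tem_def by (auto dest!: spec[of _ "Suc n"] simp: field_simps)

lemma aif_tem_integral:
  assumes "aif_tem \<kappa> \<delta> x t b" and "\<kappa> > 0"
  shows "integral {t n..t (Suc n)} (\<lambda>s. x s + b (Suc n)) = \<kappa> * \<delta>"
  using assms unfolding aif_tem_def by (auto dest!: spec[of _ "Suc n"] simp: field_simps)

lemma bandlimited_integrable_on:
  assumes "bandlimited \<Omega> x"
  shows "x integrable_on {a..d}"
  using assms integrable_on_lborel integrable_on_subinterval
  unfolding bandlimited_def by blast

lemma sum_pred_diff_telescope:
  fixes t :: "nat \<Rightarrow> 'a::ab_group_add"
  shows "(\<Sum>n=1..N. t n - t (n - 1)) = t N - t 0"
  by (induction N) (auto simp: sum.atLeast1_atMost_eq)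

lemma avg_T_eq: "avg_T N t = (t N - t 0) / real N"
  unfolding avg_T_def using sum_pred_diff_telescope[of t N] by simp

lemma samp_freq_le_if_span_le:
  assumes "N \<ge> 1" and "t N - t 0 > 0" and "t N - t 0 \<le> s N - s 0"
  shows "samp_freq N s \<le> samp_freq N t"
proof -
  have "0 < avg_T N t" and "avg_T N t \<le> avg_T N s"
    using assms by (simp_all add: avg_T_eq divide_right_mono)
  then show ?thesis
    by (simp add: samp_freq_def frac_le)
qed

lemma oversampling_mono:
  assumes "\<Omega> > 0" and "samp_freq N s \<le> samp_freq N t"
  shows "oversampling \<Omega> N s \<le> oversampling \<Omega> N t"
  using assms by (simp add: oversampling_def divide_right_mono)

theorem theorem4:
  fixes x :: "real \<Rightarrow> real"
    and \<Omega> c_max b_IF \<kappa> \<delta> \<beta> :: real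
    and w N :: nat
    and t_c t_a b :: "nat \<Rightarrow> real"
  assumes "\<Omega> > 0"
    and "bandlimited \<Omega> x"
    and "\<forall>s. \<bar>x s\<bar> \<le> c_max"
    and "b_IF > c_max" and "\<kappa> > 0" and "\<delta> > 0"
    and "if_tem b_IF \<kappa> \<delta> x t_c"
    and "aif_tem \<kappa> \<delta> x t_a b"
    and "w \<ge> 1" and "\<beta> > 0"
    and "map_success w \<beta> x t_a b"
    and "t_a 0 = t_c 0"
    and "\<forall>n\<ge>1. b n \<le> b_IF"
    and "N \<ge> 1"
  shows "samp_freq N t_a \<le> samp_freq N t_c \<and> oversampling \<Omega> N t_a \<le> oversampling \<Omega> N t_c"
proof -
  \<comment> \<open>Only the integrability of \<open>x\<close> and the bound \<open>b\<^sub>n \<le> b\<^sub>I\<^sub>F\<close> matter.\<close>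
  have x_int: "(\<lambda>s. x s + c) integrable_on {a..d}" for c a d
    using bandlimited_integrable_on[OF assms(2)] by (intro integrable_add integrable_const_ivl)
  have "mono t_a" and "strict_mono t_c"
    using assms(7,8) by (simp_all add: if_tem_def aif_tem_def strict_mono_mono)
  have "t_c N \<le> t_a N"
  proof (rule firing_times_le_of_integrand_le[where f = "\<lambda>s. x s + b_IF"
        and g = "\<lambda>n s. x s + b (Suc n)" and m = "b_IF - c_max"])
    show "x s + b (Suc n) \<le> x s + b_IF" for n s
      using assms(13) by simp
    show "b_IF - c_max \<le> x s + b_IF" for s
      using assms(3) abs_le_D2[of "x s" c_max] by simp
    show "integral {t_a n..t_a (Suc n)} (\<lambda>s. x s + b (Suc n))
        = integral {t_c n..t_c (Suc n)} (\<lambda>s. x s + b_IF)" for n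
      using if_tem_integral[OF assms(7,5)] aif_tem_integral[OF assms(8,5)] by simp
  qed (use x_int \<open>mono t_a\<close> assms(4,12) in auto)
  moreover have "t_c 0 < t_c N"
    using \<open>strict_mono t_c\<close> assms(14) by (simp add: strict_mono_less)
  ultimately have "samp_freq N t_a \<le> samp_freq N t_c"
    using assms(12,14) by (intro samp_freq_le_if_span_le) auto
  then show ?thesis
    using oversampling_mono[OF assms(1)] by blast
qed

end
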